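(* Let $X$ be a countable infinite set, $\mathcal{I}$ a meager ideal on $X$, and $(Y,\rho)$ a countable crowded $T_1$ space with $\pi w(\rho)<\mathfrak{m}_c$. Then there is an $\mathcal{I}$-crowded topology $\tau$ on $X$ such that $(X,\tau)$ is homeomorphic to $(Y,\rho)$.
   Context: An ideal on $X$ is a family of subsets of $X$ closed under subsets and finite unions; all ideals are assumed proper ($X\notin\mathcal{I}$) and free (every finite subset of $X$ is in $\mathcal{I}$). Meagerness refers to $\mathcal{I}$ as a subset of $2^X$ (identifying sets with characteristic functions). A topology $\tau$ on $X$ is $\mathcal{I}$-crowded if $\tau\cap\mathcal{I}=\{\emptyset\}$. Crowded means without isolated points. $\mathfrak{m}_c$ is the least cardinal $\kappa$ such that MA$(\kappa)$ for countable posets fails. $\pi w$ denotes $\pi$-weight. *)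

theory Defs
  imports "HOL-Analysis.Analysis"
begin

definition is_ideal :: "'a set \<Rightarrow> 'a set set \<Rightarrow> bool" where
  "is_ideal X I \<longleftrightarrow> I \<subseteq> Pow X
     \<and> (\<forall>A\<in>I. \<forall>B. B \<subseteq> A \<longrightarrow> B \<in> I)
     \<and> (\<forall>A\<in>I. \<forall>B\<in>I. A \<union> B \<in> I)
     \<and> X \<notin> I
     \<and> (\<forall>F. F \<subseteq> X \<and> finite F \<longrightarrow> F \<in> I)"

text \<open>Cantor space 2^X: product of discrete two-point spaces; a set A is identified
  with its characteristic function (restricted to X).\<close>
definition cantor_space :: "'a set \<Rightarrow> ('a \<Rightarrow> bool) topology" where
  "cantor_space X = product_topology (\<lambda>_. discrete_topology (UNIV::bool set)) X"

definition char_fun :: "'a set \<Rightarrow> 'a set \<Rightarrow> ('a \<Rightarrow> bool)" where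
  "char_fun X A = restrict (\<lambda>x. x \<in> A) X"

definition nowhere_dense_in :: "'a topology \<Rightarrow> 'a set \<Rightarrow> bool" where
  "nowhere_dense_in T N \<longleftrightarrow> N \<subseteq> topspace T \<and> T interior_of (T closure_of N) = {}"

definition meager_in :: "'a topology \<Rightarrow> 'a set \<Rightarrow> bool" where
  "meager_in T S \<longleftrightarrow> (\<exists>F. countable F \<and> (\<forall>N\<in>F. nowhere_dense_in T N) \<and> S \<subseteq> \<Union>F)"

definition meager_ideal :: "'a set \<Rightarrow> 'a set set \<Rightarrow> bool" where
  "meager_ideal X I \<longleftrightarrow> meager_in (cantor_space X) (char_fun X ` I)"

definition I_crowded :: "'a set set \<Rightarrow> 'a topology \<Rightarrow> bool" where
  "I_crowded I \<tau> \<longleftrightarrow> (\<forall>U. openin \<tau> U \<and> U \<in> I \<longrightarrow> U = {})"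

definition crowded :: "'a topology \<Rightarrow> bool" where
  "crowded T \<longleftrightarrow> (\<forall>y\<in>topspace T. \<not> openin T {y})"

definition pi_base :: "'a topology \<Rightarrow> 'a set set \<Rightarrow> bool" where
  "pi_base T B \<longleftrightarrow> (\<forall>V\<in>B. openin T V \<and> V \<noteq> {})
     \<and> (\<forall>U. openin T U \<and> U \<noteq> {} \<longrightarrow> (\<exists>V\<in>B. V \<subseteq> U))"

text \<open>B is a pi-base of minimal cardinality, i.e. |B| = pi w(T).\<close>
definition pi_weight_witness :: "'a topology \<Rightarrow> 'a set set \<Rightarrow> bool" where
  "pi_weight_witness T B \<longleftrightarrow> pi_base T B
     \<and> (\<forall>B'. pi_base T B' \<longrightarrow> (card_of B, card_of B') \<in> ordLeq)"

text \<open>Countable posets (preorders) are w.l.o.g. carried by a nonempty set of naturals.\<close>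
definition ctbl_poset :: "nat set \<Rightarrow> (nat \<Rightarrow> nat \<Rightarrow> bool) \<Rightarrow> bool" where
  "ctbl_poset P le \<longleftrightarrow> P \<noteq> {} \<and> (\<forall>p\<in>P. le p p)
     \<and> (\<forall>p\<in>P. \<forall>q\<in>P. \<forall>r\<in>P. le p q \<and> le q r \<longrightarrow> le p r)"

definition dense_in_poset :: "nat set \<Rightarrow> (nat \<Rightarrow> nat \<Rightarrow> bool) \<Rightarrow> nat set \<Rightarrow> bool" where
  "dense_in_poset P le D \<longleftrightarrow> D \<subseteq> P \<and> (\<forall>p\<in>P. \<exists>q\<in>D. le q p)"

definition filter_in_poset :: "nat set \<Rightarrow> (nat \<Rightarrow> nat \<Rightarrow> bool) \<Rightarrow> nat set \<Rightarrow> bool" where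
  "filter_in_poset P le G \<longleftrightarrow> G \<subseteq> P \<and> G \<noteq> {}
     \<and> (\<forall>p\<in>G. \<forall>q\<in>P. le p q \<longrightarrow> q \<in> G)
     \<and> (\<forall>p\<in>G. \<forall>q\<in>G. \<exists>r\<in>G. le r p \<and> le r q)"

text \<open>MA(kappa) for countable posets, with kappa = |S|: every family of at most |S|
  dense subsets of a countable poset is met by a single filter.\<close>
definition MA_countable :: "'b set \<Rightarrow> bool" where
  "MA_countable S \<longleftrightarrow> (\<forall>P le (\<D>::nat set set). ctbl_poset P le
      \<and> (card_of \<D>, card_of S) \<in> ordLeq \<and> (\<forall>D\<in>\<D>. dense_in_poset P le D)
      \<longrightarrow> (\<exists>G. filter_in_poset P le G \<and> (\<forall>D\<in>\<D>. G \<inter> D \<noteq> {})))"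

text \<open>pi w(T) < m_c: since MA(kappa) is downward monotone in kappa and m_c is the least
  kappa where it fails, kappa < m_c iff MA(kappa) holds.\<close>
definition pi_weight_less_mc :: "'a topology \<Rightarrow> bool" where
  "pi_weight_less_mc T \<longleftrightarrow> (\<exists>B. pi_weight_witness T B \<and> MA_countable B)"

end

theory Submission
  imports Defs
begin

text \<open>Enumerate nowhere dense sets \<open>N\<^sub>0, N\<^sub>1, \<dots>\<close> covering \<open>\<I>\<close> in \<open>2\<^sup>X\<close>. As in Talagrand's
  characterization of meager ideals, choose pairwise disjoint finite sets \<open>G\<^sub>k \<subseteq> X\<close> and patterns
  \<open>s\<^sub>k \<subseteq> G\<^sub>k\<close> such that every function that agrees with \<open>s\<^sub>k\<close> on \<open>G\<^sub>k\<close> avoids \<open>N\<^sub>0, \<dots>, N\<^sub>k\<close>;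
  then no member of \<open>\<I>\<close> contains infinitely many \<open>s\<^sub>k\<close>. Next, MA for the countable poset of
  finite partial bijections \<open>X \<rightharpoonup> Y\<close> yields a bijection \<open>g : X \<rightarrow> Y\<close> mapping infinitely many
  \<open>s\<^sub>k\<close> into each member of a minimal \<open>\<pi>\<close>-base; there are only \<open>\<pi>w(\<rho>) \<cdot> \<aleph>\<^sub>0\<close> dense sets to meet.
  The topology pulled back along \<open>g\<close> is homeomorphic to \<open>\<rho>\<close>, and each of its nonempty open sets
  contains the preimage of a \<open>\<pi>\<close>-base element, hence infinitely many \<open>s\<^sub>k\<close>, so it is not in \<open>\<I>\<close>.\<close>

section \<open>Cylinders and nowhere dense sets in the Cantor space\<close>

definition cylinder :: "'a set \<Rightarrow> 'a set \<Rightarrow> 'a set \<Rightarrow> ('a \<Rightarrow> bool) set" where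
  "cylinder X G s = {f \<in> topspace (cantor_space X). \<forall>x\<in>G. f x = (x \<in> s)}"

lemma topspace_cantor_space: "topspace (cantor_space X) = PiE X (\<lambda>_. UNIV)"
  by (simp add: cantor_space_def)

lemma char_fun_in_cylinder: "G \<subseteq> X \<Longrightarrow> char_fun X s \<in> cylinder X G s"
  unfolding cylinder_def char_fun_def topspace_cantor_space by auto

lemma cylinder_antimono:
  assumes "G \<subseteq> G'" "s' \<inter> G = s"
  shows "cylinder X G' s' \<subseteq> cylinder X G s"
  using assms unfolding cylinder_def by auto

lemma openin_cylinder:
  assumes "finite G" "G \<subseteq> X"
  shows "openin (cantor_space X) (cylinder X G s)"
proof -
  define S where "S = (\<lambda>x. if x \<in> G then {x \<in> s} else (UNIV::bool set))"
  have eq: "cylinder X G s = PiE X S"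
  proof (rule set_eqI)
    fix f :: "'a \<Rightarrow> bool"
    have "(\<forall>x\<in>X. f x \<in> S x) \<longleftrightarrow> (\<forall>x\<in>G. f x = (x \<in> s))"
      using assms(2) unfolding S_def by auto
    then show "f \<in> cylinder X G s \<longleftrightarrow> f \<in> PiE X S"
      unfolding cylinder_def topspace_cantor_space PiE_iff by blast
  qed
  have "finite {x \<in> X. S x \<noteq> topspace (discrete_topology (UNIV::bool set))}"
    by (rule finite_subset[OF _ assms(1)]) (auto simp: S_def)
  then show ?thesis
    unfolding eq cantor_space_def by (subst openin_PiE_gen) auto
qed

lemma openin_cantor_space_cylinder_subset:
  assumes "openin (cantor_space X) W" "f \<in> W"
  obtains H where "finite H" "H \<subseteq> X" "cylinder X H {x \<in> H. f x} \<subseteq> W"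
proof -
  obtain U where U: "finite {x \<in> X. U x \<noteq> UNIV}" "f \<in> PiE X U" "PiE X U \<subseteq> W"
    using assms(1)[unfolded cantor_space_def openin_product_topology_alt, rule_format, OF assms(2)]
    by auto
  let ?H = "{x \<in> X. U x \<noteq> UNIV}"
  have "g \<in> PiE X U" if "g \<in> cylinder X ?H {x \<in> ?H. f x}" for g
  proof -
    have "g x \<in> U x" if "x \<in> X" for x
      using \<open>g \<in> cylinder X ?H _\<close> U(2) that
      by (cases "U x = UNIV") (auto simp: cylinder_def PiE_iff)
    moreover have "g \<in> extensional X"
      using \<open>g \<in> cylinder X ?H _\<close> by (simp add: cylinder_def topspace_cantor_space PiE_iff)
    ultimately show ?thesis by (simp add: PiE_iff)
  qed
  then have "cylinder X ?H {x \<in> ?H. f x} \<subseteq> W" using U(3) by blast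
  with U(1) that show ?thesis by auto
qed

lemma nowhere_dense_avoiding_extension:
  assumes N: "nowhere_dense_in (cantor_space X) N"
    and F: "finite F" "F \<subseteq> X" and G: "finite G" "G \<subseteq> X" "G \<inter> F = {}" "s \<subseteq> G"
    and u: "u \<subseteq> F"
  obtains G' s' where "finite G'" "G \<subseteq> G'" "G' \<subseteq> X" "G' \<inter> F = {}" "s' \<subseteq> G'" "s' \<inter> G = s"
    "cylinder X F u \<inter> cylinder X G' s' \<inter> N = {}"
proof -
  let ?T = "cantor_space X"
  let ?C = "cylinder X (F \<union> G) (u \<union> s)"
  have "?C \<noteq> {}" using char_fun_in_cylinder[of "F \<union> G" X] F G by blast
  have "openin ?T ?C" using F G by (intro openin_cylinder) auto
  have "\<not> ?C \<subseteq> ?T closure_of N"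
  proof
    assume "?C \<subseteq> ?T closure_of N"
    then have "?C \<subseteq> ?T interior_of (?T closure_of N)"
      using \<open>openin ?T ?C\<close> by (rule interior_of_maximal)
    then show False using N \<open>?C \<noteq> {}\<close> unfolding nowhere_dense_in_def by blast
  qed
  then obtain f0 where f0: "f0 \<in> ?C" "f0 \<notin> ?T closure_of N" by blast
  then have "f0 \<in> topspace ?T - ?T closure_of N" unfolding cylinder_def by blast
  moreover have "openin ?T (topspace ?T - ?T closure_of N)" by (simp add: openin_diff)
  ultimately obtain H where H: "finite H" "H \<subseteq> X"
      "cylinder X H {x \<in> H. f0 x} \<subseteq> topspace ?T - ?T closure_of N"
    using openin_cantor_space_cylinder_subset by metis
  define G' where "G' = (H \<union> G) - F"
  define s' where "s' = {x \<in> G'. f0 x}"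
  have f0F: "f0 x = (x \<in> u)" if "x \<in> F" for x
    using f0(1) that G(3,4) u unfolding cylinder_def by auto
  have f0G: "f0 x = (x \<in> s)" if "x \<in> G" for x
    using f0(1) that G(3,4) u unfolding cylinder_def by auto
  have "cylinder X F u \<inter> cylinder X G' s' \<subseteq> cylinder X H {x \<in> H. f0 x}"
    unfolding cylinder_def G'_def s'_def using f0F by auto
  moreover have "N \<subseteq> ?T closure_of N"
    using N closure_of_subset unfolding nowhere_dense_in_def by blast
  ultimately have avoid: "cylinder X F u \<inter> cylinder X G' s' \<inter> N = {}" using H(3) by blast
  have "s' \<inter> G = s" using f0G G(3,4) unfolding s'_def G'_def by auto
  moreover have "finite G'" "G \<subseteq> G'" "G' \<subseteq> X" "G' \<inter> F = {}" "s' \<subseteq> G'"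
    using H G unfolding G'_def s'_def by auto
  ultimately show ?thesis using that avoid by blast
qed

lemma finitely_many_nowhere_dense_avoiding_extension:
  assumes "finite Q" "\<forall>(u, N)\<in>Q. u \<subseteq> F \<and> nowhere_dense_in (cantor_space X) N"
    and F: "finite F" "F \<subseteq> X"
  shows "\<exists>G s. finite G \<and> G \<subseteq> X \<and> G \<inter> F = {} \<and> s \<subseteq> G \<and>
           (\<forall>(u, N)\<in>Q. cylinder X F u \<inter> cylinder X G s \<inter> N = {})"
  using assms(1,2)
proof (induction Q rule: finite_induct)
  case empty
  show ?case by (intro exI[of _ "{}"]) auto
next
  case (insert q Q)
  obtain u N where q: "q = (u, N)" by force
  from insert obtain G s where Gs: "finite G" "G \<subseteq> X" "G \<inter> F = {}" "s \<subseteq> G"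
    "\<forall>(u, N)\<in>Q. cylinder X F u \<inter> cylinder X G s \<inter> N = {}"
    by auto
  obtain G' s' where G': "finite G'" "G \<subseteq> G'" "G' \<subseteq> X" "G' \<inter> F = {}" "s' \<subseteq> G'" "s' \<inter> G = s"
    "cylinder X F u \<inter> cylinder X G' s' \<inter> N = {}"
    using nowhere_dense_avoiding_extension[OF _ F Gs(1-4), of N u] insert.prems q by auto
  have "cylinder X G' s' \<subseteq> cylinder X G s" using cylinder_antimono[OF G'(2,6)] .
  then have "\<forall>(u, N)\<in>insert q Q. cylinder X F u \<inter> cylinder X G' s' \<inter> N = {}"
    using Gs(5) G'(7) q by fastforce
  then show ?case using G' by blast
qed

lemma nowhere_dense_avoiding_cylinder:
  assumes "finite \<N>" "\<forall>N\<in>\<N>. nowhere_dense_in (cantor_space X) N" "finite F" "F \<subseteq> X"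
  shows "\<exists>G s. finite G \<and> G \<subseteq> X \<and> G \<inter> F = {} \<and> s \<subseteq> G \<and> (\<forall>N\<in>\<N>. cylinder X G s \<inter> N = {})"
proof -
  obtain G s where Gs: "finite G" "G \<subseteq> X" "G \<inter> F = {}" "s \<subseteq> G"
    "\<forall>(u, N)\<in>Pow F \<times> \<N>. cylinder X F u \<inter> cylinder X G s \<inter> N = {}"
    using finitely_many_nowhere_dense_avoiding_extension[of "Pow F \<times> \<N>" F X] assms by auto
  have "f \<notin> N" if "N \<in> \<N>" "f \<in> cylinder X G s" for f N
  proof -
    have "f \<in> cylinder X F {x \<in> F. f x}" using that(2) unfolding cylinder_def by auto
    moreover have "({x \<in> F. f x}, N) \<in> Pow F \<times> \<N>" using that(1) by auto
    ultimately show ?thesis using Gs(5) that(2) by fastforce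
  qed
  then have "\<forall>N\<in>\<N>. cylinder X G s \<inter> N = {}" by blast
  with Gs(1-4) show ?thesis by blast
qed

section \<open>Talagrand blocks of a meager ideal\<close>

definition avoiding_block ::
    "'a set \<Rightarrow> (nat \<Rightarrow> ('a \<Rightarrow> bool) set) \<Rightarrow> 'a set \<Rightarrow> nat \<Rightarrow> 'a set \<times> 'a set \<Rightarrow> bool" where
  "avoiding_block X Ns F k p \<longleftrightarrow> finite (fst p) \<and> fst p \<subseteq> X \<and> fst p \<inter> F = {} \<and> snd p \<subseteq> fst p \<and>
     (\<forall>j\<le>k. cylinder X (fst p) (snd p) \<inter> Ns j = {})"

definition choose_block :: "'a set \<Rightarrow> (nat \<Rightarrow> ('a \<Rightarrow> bool) set) \<Rightarrow> 'a set \<Rightarrow> nat \<Rightarrow> 'a set \<times> 'a set" where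
  "choose_block X Ns F k = (SOME p. avoiding_block X Ns F k p)"

primrec blocks_before :: "'a set \<Rightarrow> (nat \<Rightarrow> ('a \<Rightarrow> bool) set) \<Rightarrow> nat \<Rightarrow> 'a set" where
  "blocks_before X Ns 0 = {}"
| "blocks_before X Ns (Suc k) =
     blocks_before X Ns k \<union> fst (choose_block X Ns (blocks_before X Ns k) k)"

definition block :: "'a set \<Rightarrow> (nat \<Rightarrow> ('a \<Rightarrow> bool) set) \<Rightarrow> nat \<Rightarrow> 'a set \<times> 'a set" where
  "block X Ns k = choose_block X Ns (blocks_before X Ns k) k"

lemma avoiding_block_choose_block:
  assumes "\<forall>j. nowhere_dense_in (cantor_space X) (Ns j)" "finite F" "F \<subseteq> X"
  shows "avoiding_block X Ns F k (choose_block X Ns F k)"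
proof -
  obtain G s where "finite G" "G \<subseteq> X" "G \<inter> F = {}" "s \<subseteq> G" "\<forall>N\<in>Ns ` {..k}. cylinder X G s \<inter> N = {}"
    using nowhere_dense_avoiding_cylinder[of "Ns ` {..k}" X F] assms by auto
  then have "avoiding_block X Ns F k (G, s)" unfolding avoiding_block_def by auto
  then show ?thesis unfolding choose_block_def by (rule someI)
qed

lemma avoiding_block_block:
  assumes "\<forall>j. nowhere_dense_in (cantor_space X) (Ns j)"
  shows "avoiding_block X Ns (blocks_before X Ns k) k (block X Ns k)"
proof -
  have "finite (blocks_before X Ns k) \<and> blocks_before X Ns k \<subseteq> X"
  proof (induction k)
    case (Suc k)
    then have "avoiding_block X Ns (blocks_before X Ns k) k
        (choose_block X Ns (blocks_before X Ns k) k)"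
      using avoiding_block_choose_block[OF assms] by blast
    with Suc show ?case unfolding avoiding_block_def by simp
  qed simp
  then show ?thesis
    unfolding block_def by (intro avoiding_block_choose_block[OF assms]) simp_all
qed

lemma block_subset_blocks_before: "i < k \<Longrightarrow> fst (block X Ns i) \<subseteq> blocks_before X Ns k"
  by (induction k) (auto simp: block_def less_Suc_eq)

lemma disjoint_family_block:
  assumes "\<forall>j. nowhere_dense_in (cantor_space X) (Ns j)"
  shows "disjoint_family (\<lambda>k. fst (block X Ns k))"
proof -
  have "fst (block X Ns i) \<inter> fst (block X Ns k) = {}" if "i < k" for i k
  proof -
    have "fst (block X Ns k) \<inter> blocks_before X Ns k = {}"
      using avoiding_block_block[OF assms, of k] unfolding avoiding_block_def by simp
    then show ?thesis using block_subset_blocks_before[where X = X and Ns = Ns, OF that] by auto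
  qed
  then show ?thesis
    unfolding disjoint_family_on_def by (metis Int_commute nat_neq_iff)
qed

text \<open>If the pattern of block \<open>k\<close> lies in \<open>A\<close> for infinitely many \<open>k\<close>, the set \<open>B \<subseteq> A\<close> below
  matches all these patterns, so its characteristic function escapes every \<open>N\<^sub>j\<close>.\<close>

lemma finite_blocks_subset_ideal_member:
  assumes I: "is_ideal X I" and nd: "\<forall>j. nowhere_dense_in (cantor_space X) (Ns j)"
    and cover: "char_fun X ` I \<subseteq> \<Union>(range Ns)" and "A \<in> I"
  shows "finite {k. snd (block X Ns k) \<subseteq> A}"
proof (rule ccontr)
  assume "infinite {k. snd (block X Ns k) \<subseteq> A}"
  define G where "G k = fst (block X Ns k)" for k
  define S where "S k = snd (block X Ns k)" for k
  have blk: "G k \<subseteq> X" "S k \<subseteq> G k" "\<forall>j\<le>k. cylinder X (G k) (S k) \<inter> Ns j = {}" for k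
    using avoiding_block_block[OF nd, of k] unfolding avoiding_block_def G_def S_def by simp_all
  have disj: "disjoint_family G" unfolding G_def using disjoint_family_block[OF nd] .
  define K where "K = {k. S k \<subseteq> A}"
  define B where "B = (A - (\<Union>k\<in>K. G k)) \<union> (\<Union>k\<in>K. S k)"
  have inf: "infinite K" unfolding K_def S_def by fact
  have "B \<subseteq> A" unfolding B_def K_def by blast
  with \<open>A \<in> I\<close> have "B \<in> I" using I unfolding is_ideal_def by blast
  then obtain j where j: "char_fun X B \<in> Ns j" using cover by blast
  obtain k where k: "k \<in> K" "j \<le> k" using inf unfolding infinite_nat_iff_unbounded_le by blast
  have "x \<in> S k" if x: "x \<in> B" "x \<in> G k" for x
  proof -
    from x(1) consider "x \<in> A - (\<Union>k\<in>K. G k)" | k' where "k' \<in> K" "x \<in> S k'"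
      unfolding B_def by blast
    then show ?thesis
    proof cases
      case 1
      with k(1) x(2) show ?thesis by blast
    next
      case 2
      then have "x \<in> G k'" using blk(2) by blast
      with x(2) disj have "k' = k" unfolding disjoint_family_on_def by blast
      with 2 show ?thesis by simp
    qed
  qed
  moreover have "S k \<subseteq> B" using k(1) unfolding B_def by blast
  ultimately have "B \<inter> G k = S k" using blk(2) by blast
  then have "char_fun X B \<in> cylinder X (G k) (S k)"
    using char_fun_in_cylinder[OF blk(1), of B] cylinder_antimono[OF order_refl, of B "G k"]
    by blast
  then show False using blk(3) k(2) j by blast
qed

lemma meager_ideal_disjoint_blocks:
  assumes I: "is_ideal X I" "meager_ideal X I"
  obtains S :: "nat \<Rightarrow> 'a set"
  where "disjoint_family S" "\<forall>k. finite (S k)" "\<forall>k. S k \<subseteq> X" "\<forall>A\<in>I. finite {k. S k \<subseteq> A}"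
proof -
  obtain \<N> where \<N>: "countable \<N>" "\<forall>N\<in>\<N>. nowhere_dense_in (cantor_space X) N" "char_fun X ` I \<subseteq> \<Union>\<N>"
    using I(2) unfolding meager_ideal_def meager_in_def by blast
  have "{} \<in> I" using I(1) unfolding is_ideal_def by simp
  then have "\<N> \<noteq> {}" using \<N>(3) by blast
  define Ns where "Ns = from_nat_into \<N>"
  have nd: "\<forall>j. nowhere_dense_in (cantor_space X) (Ns j)"
    using \<N>(2) from_nat_into[OF \<open>\<N> \<noteq> {}\<close>] unfolding Ns_def by blast
  have cover: "char_fun X ` I \<subseteq> \<Union>(range Ns)"
    using \<N>(3) range_from_nat_into[OF \<open>\<N> \<noteq> {}\<close> \<N>(1)] unfolding Ns_def by auto
  have blk: "finite (fst (block X Ns k))" "fst (block X Ns k) \<subseteq> X"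
      "snd (block X Ns k) \<subseteq> fst (block X Ns k)" for k
    using avoiding_block_block[OF nd, of k] unfolding avoiding_block_def by simp_all
  show ?thesis
  proof (rule that)
    show "disjoint_family (\<lambda>k. snd (block X Ns k))"
      using disjoint_family_block[OF nd] blk(3) unfolding disjoint_family_on_def by blast
    show "\<forall>k. finite (snd (block X Ns k))" using finite_subset[OF blk(3) blk(1)] by blast
    show "\<forall>k. snd (block X Ns k) \<subseteq> X" using blk(2,3) by blast
    show "\<forall>A\<in>I. finite {k. snd (block X Ns k) \<subseteq> A}"
      using finite_blocks_subset_ideal_member[OF I(1) nd cover] by blast
  qed
qed

section \<open>Generic bijections from MA for countable posets\<close>

lemma MA_countable_directed:
  fixes C :: "'c set set" and D :: "'i \<Rightarrow> 'c set set"
  assumes MA: "MA_countable S" and C: "countable C" "C \<noteq> {}"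
    and J: "(card_of J, card_of S) \<in> ordLeq"
    and dense: "\<And>i p. i \<in> J \<Longrightarrow> p \<in> C \<Longrightarrow> \<exists>q\<in>C \<inter> D i. p \<subseteq> q"
  obtains G where "G \<subseteq> C" "\<forall>p\<in>G. \<forall>q\<in>G. \<exists>r\<in>G. p \<subseteq> r \<and> q \<subseteq> r" "\<forall>i\<in>J. G \<inter> D i \<noteq> {}"
proof -
  define dec where "dec = from_nat_into C"
  have dec: "dec n \<in> C" for n using from_nat_into[OF C(2)] unfolding dec_def .
  have dec_surj: "\<exists>n. dec n = p" if "p \<in> C" for p
    using from_nat_into_surj[OF C(1) that] unfolding dec_def by blast
  define le where "le m n \<longleftrightarrow> dec n \<subseteq> dec m" for m n
  define E where "E i = {n. dec n \<in> D i}" for i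
  have poset: "ctbl_poset UNIV le" unfolding ctbl_poset_def le_def by auto
  have card: "(card_of (E ` J), card_of S) \<in> ordLeq"
    using ordLeq_transitive[OF card_of_image J] .
  have "dense_in_poset UNIV le (E i)" if i: "i \<in> J" for i
    unfolding dense_in_poset_def
  proof (intro conjI ballI)
    fix m
    obtain q where q: "q \<in> C \<inter> D i" "dec m \<subseteq> q" using dense[OF i dec] by blast
    then obtain n where "dec n = q" using dec_surj by blast
    with q have "n \<in> E i" "le n m" unfolding E_def le_def by auto
    then show "\<exists>n\<in>E i. le n m" by blast
  qed simp
  then have "\<forall>E'\<in>E ` J. dense_in_poset UNIV le E'" by blast
  then obtain F where F: "filter_in_poset UNIV le F" "\<forall>E'\<in>E ` J. F \<inter> E' \<noteq> {}"
    using MA[unfolded MA_countable_def, rule_format, OF conjI[OF poset conjI[OF card]]] by blast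
  show ?thesis
  proof (rule that[of "dec ` F"])
    show "dec ` F \<subseteq> C" using dec by blast
    show "\<forall>p\<in>dec ` F. \<forall>q\<in>dec ` F. \<exists>r\<in>dec ` F. p \<subseteq> r \<and> q \<subseteq> r"
    proof (intro ballI)
      fix p q assume pq: "p \<in> dec ` F" "q \<in> dec ` F"
      obtain m n where mn: "m \<in> F" "n \<in> F" "p = dec m" "q = dec n" using pq by blast
      then obtain r where "r \<in> F" "le r m" "le r n"
        using F(1) unfolding filter_in_poset_def by blast
      with mn show "\<exists>r\<in>dec ` F. p \<subseteq> r \<and> q \<subseteq> r" unfolding le_def by blast
    qed
    show "\<forall>i\<in>J. dec ` F \<inter> D i \<noteq> {}"
    proof
      fix i assume "i \<in> J"
      then have "F \<inter> E i \<noteq> {}" using F(2) by blast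
      then show "dec ` F \<inter> D i \<noteq> {}" unfolding E_def by blast
    qed
  qed
qed

definition finite_partial_bijections :: "'a set \<Rightarrow> 'b set \<Rightarrow> ('a \<times> 'b) set set" where
  "finite_partial_bijections X Y = {p. finite p \<and> p \<subseteq> X \<times> Y \<and>
     (\<forall>a b c d. (a, b) \<in> p \<and> (c, d) \<in> p \<longrightarrow> (a = c \<longleftrightarrow> b = d))}"

lemma finite_partial_bijectionsD:
  assumes "p \<in> finite_partial_bijections X Y"
  shows "finite p" "p \<subseteq> X \<times> Y" "\<And>a b c d. (a, b) \<in> p \<Longrightarrow> (c, d) \<in> p \<Longrightarrow> a = c \<longleftrightarrow> b = d"
  using assms unfolding finite_partial_bijections_def by simp_all

lemma countable_finite_partial_bijections:
  assumes "countable X" "countable Y"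
  shows "countable (finite_partial_bijections X Y)"
proof -
  have "countable {p. finite p \<and> p \<subseteq> X \<times> Y}"
    using assms by (intro countable_Collect_finite_subset) simp
  then show ?thesis by (rule countable_subset[rotated]) (auto simp: finite_partial_bijections_def)
qed

lemma insert_finite_partial_bijections:
  assumes "p \<in> finite_partial_bijections X Y" "a \<in> X" "b \<in> Y" "a \<notin> fst ` p" "b \<notin> snd ` p"
  shows "insert (a, b) p \<in> finite_partial_bijections X Y"
  using assms unfolding finite_partial_bijections_def by (auto simp: rev_image_eqI) blast+

lemma finite_partial_bijections_extend_domain:
  assumes p: "p \<in> finite_partial_bijections X Y" and A: "finite A" "A \<subseteq> X" "A \<inter> fst ` p = {}"
    and Z: "Z \<subseteq> Y" "infinite Z"
  shows "\<exists>q\<in>finite_partial_bijections X Y. p \<subseteq> q \<and> (\<forall>a\<in>A. \<exists>b\<in>Z. (a, b) \<in> q)"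
proof -
  have "\<exists>q\<in>finite_partial_bijections X Y. p \<subseteq> q \<and> fst ` q \<subseteq> fst ` p \<union> A \<and> (\<forall>a\<in>A. \<exists>b\<in>Z. (a, b) \<in> q)"
    using A
  proof (induction A rule: finite_induct)
    case empty
    with p show ?case by blast
  next
    case (insert a A)
    then obtain q where q: "q \<in> finite_partial_bijections X Y" "p \<subseteq> q" "fst ` q \<subseteq> fst ` p \<union> A"
      "\<forall>a\<in>A. \<exists>b\<in>Z. (a, b) \<in> q"
      by auto
    have "finite q" using q(1) by (rule finite_partial_bijectionsD(1))
    then have "infinite (Z - snd ` q)" using Z(2) by simp
    then obtain b where b: "b \<in> Z" "b \<notin> snd ` q" using infinite_imp_nonempty by blast
    have "a \<notin> fst ` q" using q(3) insert.hyps(2) insert.prems(2) by blast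
    then have "insert (a, b) q \<in> finite_partial_bijections X Y"
      using insert.prems(1) b Z(1) by (intro insert_finite_partial_bijections[OF q(1)]) auto
    then show ?case using q b by (intro bexI[of _ "insert (a, b) q"]) auto
  qed
  then show ?thesis by blast
qed

lemma finite_partial_bijections_extend_domain_point:
  assumes p: "p \<in> finite_partial_bijections X Y" and "x \<in> X" "infinite Y"
  shows "\<exists>q\<in>finite_partial_bijections X Y. p \<subseteq> q \<and> x \<in> fst ` q"
proof (cases "x \<in> fst ` p")
  case False
  then obtain q where q: "q \<in> finite_partial_bijections X Y" "p \<subseteq> q" "\<exists>b\<in>Y. (x, b) \<in> q"
    using finite_partial_bijections_extend_domain[OF p, of "{x}" Y] assms(2,3) by auto
  then obtain b where "(x, b) \<in> q" by blast
  then have "x \<in> fst ` q" by force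
  with q(1,2) show ?thesis by blast
qed (use p in \<open>intro bexI[of _ p]\<close>, auto)

lemma finite_partial_bijections_extend_range:
  assumes p: "p \<in> finite_partial_bijections X Y" and "y \<in> Y" "infinite X"
  shows "\<exists>q\<in>finite_partial_bijections X Y. p \<subseteq> q \<and> y \<in> snd ` q"
proof (cases "y \<in> snd ` p")
  case False
  have "finite p" using p by (rule finite_partial_bijectionsD(1))
  then have "infinite (X - fst ` p)" using assms(3) by simp
  then obtain x where "x \<in> X" "x \<notin> fst ` p" using infinite_imp_nonempty by blast
  then have "insert (x, y) p \<in> finite_partial_bijections X Y"
    using insert_finite_partial_bijections[OF p] assms(2) False by blast
  then show ?thesis by (intro bexI[of _ "insert (x, y) p"]) auto
qed (use p in \<open>intro bexI[of _ p]\<close>, auto)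

lemma disjoint_family_eventually_disjoint:
  fixes S :: "nat \<Rightarrow> 'a set"
  assumes "disjoint_family S" "finite D"
  obtains k where "k \<ge> j" "S k \<inter> D = {}"
proof -
  have "k = (LEAST k. a \<in> S k)" if "a \<in> S k" for a k
    using LeastI[of "\<lambda>k. a \<in> S k", OF that] that assms(1) unfolding disjoint_family_on_def by blast
  then have "{k. a \<in> S k} \<subseteq> {LEAST k. a \<in> S k}" for a by blast
  then have "finite {k. a \<in> S k}" for a by (rule finite_subset) simp
  moreover have "{k. S k \<inter> D \<noteq> {}} = (\<Union>a\<in>D. {k. a \<in> S k})" by blast
  ultimately have "finite {k. S k \<inter> D \<noteq> {}}" using assms(2) by simp
  then obtain m where "\<And>k. S k \<inter> D \<noteq> {} \<Longrightarrow> k \<le> m" using finite_nat_set_iff_bounded_le by auto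
  then show ?thesis using that[of "Suc (max j m)"] by fastforce
qed

lemma finite_partial_bijections_extend_block:
  fixes S :: "nat \<Rightarrow> 'a set"
  assumes p: "p \<in> finite_partial_bijections X Y"
    and S: "disjoint_family S" "\<forall>k. finite (S k)" "\<forall>k. S k \<subseteq> X" and V: "V \<subseteq> Y" "infinite V"
  shows "\<exists>q\<in>finite_partial_bijections X Y. p \<subseteq> q \<and> (\<exists>k\<ge>j. \<forall>a\<in>S k. \<exists>b\<in>V. (a, b) \<in> q)"
proof -
  have "finite (fst ` p)" using finite_partial_bijectionsD(1)[OF p] by simp
  then obtain k where k: "k \<ge> j" "S k \<inter> fst ` p = {}"
    by (rule disjoint_family_eventually_disjoint[OF S(1)])
  with finite_partial_bijections_extend_domain[OF p _ _ k(2) V] S(2,3) show ?thesis by blast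
qed

lemma directed_Union_finite_partial_bijections_injective:
  assumes G: "G \<subseteq> finite_partial_bijections X Y" "\<forall>p\<in>G. \<forall>q\<in>G. \<exists>r\<in>G. p \<subseteq> r \<and> q \<subseteq> r"
    and ab: "(a, b) \<in> \<Union>G" and cd: "(c, d) \<in> \<Union>G"
  shows "a = c \<longleftrightarrow> b = d"
proof -
  from ab obtain p where p: "p \<in> G" "(a, b) \<in> p" by (rule UnionE)
  from cd obtain q where q: "q \<in> G" "(c, d) \<in> q" by (rule UnionE)
  from G(2) p(1) q(1) obtain r where r: "r \<in> G" "p \<subseteq> r" "q \<subseteq> r" by blast
  have "r \<in> finite_partial_bijections X Y" using G(1) r(1) by (rule subsetD)
  moreover have "(a, b) \<in> r" "(c, d) \<in> r" using p(2) q(2) r(2,3) by auto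
  ultimately show ?thesis by (rule finite_partial_bijectionsD(3))
qed

lemma Union_finite_partial_bijections_subset:
  assumes "G \<subseteq> finite_partial_bijections X Y"
  shows "\<Union>G \<subseteq> X \<times> Y"
  using assms finite_partial_bijectionsD(2) by blast

lemma directed_Union_finite_partial_bijections:
  assumes G: "G \<subseteq> finite_partial_bijections X Y" "\<forall>p\<in>G. \<forall>q\<in>G. \<exists>r\<in>G. p \<subseteq> r \<and> q \<subseteq> r"
    and XY: "\<forall>x\<in>X. \<exists>p\<in>G. x \<in> fst ` p" "\<forall>y\<in>Y. \<exists>p\<in>G. y \<in> snd ` p"
  obtains g where "bij_betw g X Y" "\<forall>(a, b)\<in>\<Union>G. g a = b"
proof -
  let ?R = "\<Union>G"
  note R = directed_Union_finite_partial_bijections_injective[OF G]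
  have RXY: "a \<in> X \<and> b \<in> Y" if "(a, b) \<in> ?R" for a b
    using Union_finite_partial_bijections_subset[OF G(1)] that by blast
  define g where "g a = (THE b. (a, b) \<in> ?R)" for a
  have g: "g a = b" if ab: "(a, b) \<in> ?R" for a b
    unfolding g_def
  proof (rule the_equality)
    show "(a, b) \<in> ?R" by (fact ab)
    show "b' = b" if "(a, b') \<in> ?R" for b' using R[OF that ab] by simp
  qed
  have gR: "(a, g a) \<in> ?R" if "a \<in> X" for a
  proof -
    from XY(1) that obtain p where "p \<in> G" "a \<in> fst ` p" by blast
    then obtain e where "a = fst e" "e \<in> ?R" by blast
    then have e: "(a, snd e) \<in> ?R" by simp
    with g[OF e] show ?thesis by simp
  qed
  have "inj_on g X"
  proof (rule inj_onI)
    fix x y assume "x \<in> X" "y \<in> X" "g x = g y"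
    with R[OF gR[OF \<open>x \<in> X\<close>] gR[OF \<open>y \<in> X\<close>]] show "x = y" by simp
  qed
  moreover have "g ` X = Y"
  proof
    show "g ` X \<subseteq> Y" using RXY[OF gR] by blast
    show "Y \<subseteq> g ` X"
    proof
      fix y assume "y \<in> Y"
      with XY(2) obtain p where "p \<in> G" "y \<in> snd ` p" by blast
      then obtain e where "y = snd e" "e \<in> ?R" by blast
      then have e: "(fst e, y) \<in> ?R" by simp
      then have "g (fst e) = y" "fst e \<in> X" using RXY[OF e] g[OF e] by auto
      then show "y \<in> g ` X" by (rule image_eqI[OF sym])
    qed
  qed
  ultimately have "bij_betw g X Y" unfolding bij_betw_def ..
  moreover have "\<forall>(a, b)\<in>?R. g a = b" by (auto intro: g)
  ultimately show ?thesis by (rule that)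
qed

lemma card_of_Times_nat_Plus_countable_le:
  fixes V :: "'v set"
  assumes "infinite V" "countable X" "countable Y"
  shows "(card_of ((V \<times> (UNIV :: nat set)) <+> (X <+> Y)), card_of V) \<in> ordLeq"
proof -
  have nat_le: "(card_of (UNIV :: nat set), card_of V) \<in> ordLeq"
    using assms(1) infinite_iff_card_of_nat by blast
  have "(card_of (V \<times> (UNIV :: nat set)), card_of V) \<in> ordIso"
    using card_of_Times_infinite_simps(1)[OF assms(1) _ nat_le] by simp
  then have times: "(card_of (V \<times> (UNIV :: nat set)), card_of V) \<in> ordLeq"
    using ordIso_iff_ordLeq by blast
  obtain f :: "_ \<Rightarrow> nat" where "inj_on f (X <+> Y)"
    using countable_Plus[OF assms(2,3)] unfolding countable_def by blast
  then have "(card_of (X <+> Y), card_of (UNIV :: nat set)) \<in> ordLeq"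
    using card_of_ordLeq[of "X <+> Y" "UNIV :: nat set"] by blast
  then have plus: "(card_of (X <+> Y), card_of V) \<in> ordLeq"
    using nat_le by (rule ordLeq_transitive)
  show ?thesis
    using card_of_Plus_ordLeq_infinite_Field[OF _ times plus card_of_Card_order] assms(1)
    by (simp add: Field_card_of)
qed

definition bijection_requirement ::
    "(nat \<Rightarrow> 'a set) \<Rightarrow> ('b set \<times> nat) + ('a + 'b) \<Rightarrow> ('a \<times> 'b) set set" where
  "bijection_requirement S = case_sum (\<lambda>(V, j). {q. \<exists>k\<ge>j. \<forall>a\<in>S k. \<exists>b\<in>V. (a, b) \<in> q})
     (case_sum (\<lambda>x. {q. x \<in> fst ` q}) (\<lambda>y. {q. y \<in> snd ` q}))"

lemma bijection_requirement_simps [simp]: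
  "bijection_requirement S (Inl (V, j)) = {q. \<exists>k\<ge>j. \<forall>a\<in>S k. \<exists>b\<in>V. (a, b) \<in> q}"
  "bijection_requirement S (Inr (Inl x)) = {q. x \<in> fst ` q}"
  "bijection_requirement S (Inr (Inr y)) = {q. y \<in> snd ` q}"
  unfolding bijection_requirement_def by simp_all

lemma bijection_requirement_dense:
  fixes S :: "nat \<Rightarrow> 'a set" and \<V> :: "'b set set"
  assumes i: "i \<in> (\<V> \<times> UNIV) <+> (X <+> Y)" and p: "p \<in> finite_partial_bijections X Y"
    and "infinite X" "infinite Y" and \<V>: "\<And>V. V \<in> \<V> \<Longrightarrow> V \<subseteq> Y" "\<And>V. V \<in> \<V> \<Longrightarrow> infinite V"
    and S: "disjoint_family S" "\<forall>k. finite (S k)" "\<forall>k. S k \<subseteq> X"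
  shows "\<exists>q\<in>finite_partial_bijections X Y \<inter> bijection_requirement S i. p \<subseteq> q"
proof -
  let ?C = "finite_partial_bijections X Y"
  consider (V) V j where "i = Inl (V, j)" "V \<in> \<V>" | (x) x where "i = Inr (Inl x)" "x \<in> X"
    | (y) y where "i = Inr (Inr y)" "y \<in> Y"
    using i by (auto elim!: PlusE)
  then show ?thesis
  proof cases
    case V
    obtain q where q: "q \<in> ?C" "p \<subseteq> q" "\<exists>k\<ge>j. \<forall>a\<in>S k. \<exists>b\<in>V. (a, b) \<in> q"
      using finite_partial_bijections_extend_block[OF p S \<V>[OF V(2)], of j] by blast
    then have "q \<in> bijection_requirement S i" unfolding V(1) by simp
    with q(1,2) show ?thesis by blast
  next
    case x
    then obtain q where q: "q \<in> ?C" "p \<subseteq> q" "x \<in> fst ` q"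
      using finite_partial_bijections_extend_domain_point[OF p _ \<open>infinite Y\<close>] by blast
    then have "q \<in> bijection_requirement S i" unfolding x(1) by simp
    with q(1,2) show ?thesis by blast
  next
    case y
    then obtain q where q: "q \<in> ?C" "p \<subseteq> q" "y \<in> snd ` q"
      using finite_partial_bijections_extend_range[OF p _ \<open>infinite X\<close>] by blast
    then have "q \<in> bijection_requirement S i" unfolding y(1) by simp
    with q(1,2) show ?thesis by blast
  qed
qed

lemma MA_countable_generic_partial_bijections:
  fixes S :: "nat \<Rightarrow> 'a set" and \<V> :: "'b set set"
  assumes X: "countable X" "infinite X" and Y: "countable Y" "infinite Y"
    and MA: "MA_countable \<V>" and "infinite \<V>"
    and \<V>: "\<And>V. V \<in> \<V> \<Longrightarrow> V \<subseteq> Y" "\<And>V. V \<in> \<V> \<Longrightarrow> infinite V"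
    and S: "disjoint_family S" "\<forall>k. finite (S k)" "\<forall>k. S k \<subseteq> X"
  obtains G where "G \<subseteq> finite_partial_bijections X Y" "\<forall>p\<in>G. \<forall>q\<in>G. \<exists>r\<in>G. p \<subseteq> r \<and> q \<subseteq> r"
    "\<forall>x\<in>X. \<exists>p\<in>G. x \<in> fst ` p" "\<forall>y\<in>Y. \<exists>p\<in>G. y \<in> snd ` p"
    "\<forall>V\<in>\<V>. \<forall>j. \<exists>p\<in>G. \<exists>k\<ge>j. \<forall>a\<in>S k. \<exists>b\<in>V. (a, b) \<in> p"
proof -
  let ?C = "finite_partial_bijections X Y"
  let ?J = "(\<V> \<times> (UNIV :: nat set)) <+> (X <+> Y)"
  have "{} \<in> ?C" unfolding finite_partial_bijections_def by simp
  then have "?C \<noteq> {}" by blast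
  moreover have "(card_of ?J, card_of \<V>) \<in> ordLeq"
    using \<open>infinite \<V>\<close> X(1) Y(1) by (rule card_of_Times_nat_Plus_countable_le)
  note dense = bijection_requirement_dense[OF _ _ X(2) Y(2) \<V> S]
  obtain G where G: "G \<subseteq> ?C" "\<forall>p\<in>G. \<forall>q\<in>G. \<exists>r\<in>G. p \<subseteq> r \<and> q \<subseteq> r"
    "\<forall>i\<in>?J. G \<inter> bijection_requirement S i \<noteq> {}"
    by (rule MA_countable_directed[OF MA countable_finite_partial_bijections[OF X(1) Y(1)]
          \<open>?C \<noteq> {}\<close> \<open>(card_of ?J, card_of \<V>) \<in> ordLeq\<close> dense])
  have hit: "\<exists>p\<in>G. p \<in> bijection_requirement S i" if "i \<in> ?J" for i using G(3) that by blast
  have J_V: "Inl (V, j) \<in> ?J" if "V \<in> \<V>" for V j using that by (intro InlI) simp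
  have J_X: "Inr (Inl x) \<in> ?J" if "x \<in> X" for x using that by (intro InrI InlI)
  have J_Y: "Inr (Inr y) \<in> ?J" if "y \<in> Y" for y using that by (intro InrI)
  show ?thesis
  proof (rule that[OF G(1,2)])
    show "\<forall>x\<in>X. \<exists>p\<in>G. x \<in> fst ` p" using hit[OF J_X] by simp
    show "\<forall>y\<in>Y. \<exists>p\<in>G. y \<in> snd ` p" using hit[OF J_Y] by simp
    show "\<forall>V\<in>\<V>. \<forall>j. \<exists>p\<in>G. \<exists>k\<ge>j. \<forall>a\<in>S k. \<exists>b\<in>V. (a, b) \<in> p"
      using hit[OF J_V] by simp
  qed
qed

lemma MA_countable_bijection_blocks_into:
  fixes S :: "nat \<Rightarrow> 'a set" and \<V> :: "'b set set"
  assumes X: "countable X" "infinite X" and Y: "countable Y"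
    and MA: "MA_countable \<V>" and "infinite \<V>" and \<V>: "\<And>V. V \<in> \<V> \<Longrightarrow> V \<subseteq> Y" "\<And>V. V \<in> \<V> \<Longrightarrow> infinite V"
    and S: "disjoint_family S" "\<forall>k. finite (S k)" "\<forall>k. S k \<subseteq> X"
  obtains g where "bij_betw g X Y" "\<forall>V\<in>\<V>. infinite {k. g ` S k \<subseteq> V}"
proof -
  obtain V0 where "V0 \<in> \<V>" using \<open>infinite \<V>\<close> infinite_imp_nonempty by blast
  then have "infinite Y" using \<V>[OF \<open>V0 \<in> \<V>\<close>] finite_subset by blast
  obtain G where G: "G \<subseteq> finite_partial_bijections X Y" "\<forall>p\<in>G. \<forall>q\<in>G. \<exists>r\<in>G. p \<subseteq> r \<and> q \<subseteq> r"
    "\<forall>x\<in>X. \<exists>p\<in>G. x \<in> fst ` p" "\<forall>y\<in>Y. \<exists>p\<in>G. y \<in> snd ` p"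
    "\<forall>V\<in>\<V>. \<forall>j. \<exists>p\<in>G. \<exists>k\<ge>j. \<forall>a\<in>S k. \<exists>b\<in>V. (a, b) \<in> p"
    by (rule MA_countable_generic_partial_bijections[OF X Y \<open>infinite Y\<close> MA \<open>infinite \<V>\<close> \<V> S])
  obtain g where g: "bij_betw g X Y" "\<forall>(a, b)\<in>\<Union>G. g a = b"
    by (rule directed_Union_finite_partial_bijections[OF G(1-4)])
  show ?thesis
  proof (rule that[OF g(1)], intro ballI)
    fix V assume "V \<in> \<V>"
    have "\<exists>k\<ge>j. g ` S k \<subseteq> V" for j
    proof -
      obtain q k where q: "q \<in> G" "k \<ge> j" "\<forall>a\<in>S k. \<exists>b\<in>V. (a, b) \<in> q"
        using G(5) \<open>V \<in> \<V>\<close> by blast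
      have "g a \<in> V" if a: "a \<in> S k" for a
      proof -
        obtain b where b: "b \<in> V" "(a, b) \<in> q" using q(3) a by blast
        from q(1) b(2) have "(a, b) \<in> \<Union>G" by (rule UnionI)
        with g(2) have "g a = b" by auto
        with b(1) show ?thesis by simp
      qed
      then have "g ` S k \<subseteq> V" by (rule image_subsetI)
      with q(2) show ?thesis by blast
    qed
    then show "infinite {k. g ` S k \<subseteq> V}" unfolding infinite_nat_iff_unbounded_le by blast
  qed
qed

section \<open>The pulled-back topology\<close>

lemma infinite_openin_crowded_t1:
  assumes "t1_space T" "crowded T" "openin T V" "V \<noteq> {}"
  shows "infinite V"
proof
  assume "finite V"
  obtain y where y: "y \<in> V" using assms(4) by blast
  have "V \<subseteq> topspace T" using assms(3) by (rule openin_subset)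
  then have "closedin T (V - {y})"
    using assms(1) \<open>finite V\<close> unfolding t1_space_closedin_finite by auto
  then have "openin T (V - (V - {y}))" by (rule openin_diff[OF assms(3)])
  moreover have "V - (V - {y}) = {y}" using y by blast
  ultimately show False
    using assms(2) y \<open>V \<subseteq> topspace T\<close> unfolding crowded_def by auto
qed

lemma infinite_pi_base:
  assumes T: "t1_space T" "crowded T" "topspace T \<noteq> {}" and B: "pi_base T B"
  shows "infinite B"
proof
  assume "finite B"
  have B_open: "openin T V" "V \<noteq> {}" if "V \<in> B" for V
    using B that unfolding pi_base_def by blast+
  then obtain c where c: "\<And>V. V \<in> B \<Longrightarrow> c V \<in> V" by (metis ex_in_conv)
  have "c ` B \<subseteq> topspace T" using c B_open(1) openin_subset by blast
  then have "closedin T (c ` B)" using T(1) \<open>finite B\<close> unfolding t1_space_closedin_finite by simp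
  then have "openin T (topspace T - c ` B)" by (simp add: openin_diff)
  moreover have "topspace T - c ` B \<noteq> {}"
  proof
    assume "topspace T - c ` B = {}"
    then have "topspace T \<subseteq> c ` B" by blast
    then have "finite (topspace T)" using finite_subset finite_imageI[OF \<open>finite B\<close>] by blast
    then show False using infinite_openin_crowded_t1[OF T(1,2) _ T(3)] by simp
  qed
  ultimately obtain V where "V \<in> B" "V \<subseteq> topspace T - c ` B"
    using B unfolding pi_base_def by meson
  then show False using c by blast
qed

lemma homeomorphic_map_pullback_topology:
  assumes g: "bij_betw g X (topspace T)"
  shows "homeomorphic_map (pullback_topology X g T) T g"
proof (rule bijective_open_imp_homeomorphic_map)
  have top: "topspace (pullback_topology X g T) = X"
    using g unfolding topspace_pullback_topology bij_betw_def by blast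
  show "continuous_map (pullback_topology X g T) T g"
    unfolding continuous_map_def top
  proof (intro conjI allI impI)
    show "g \<in> X \<rightarrow> topspace T" using g bij_betwE by blast
    show "openin (pullback_topology X g T) {x \<in> X. g x \<in> U}" if "openin T U" for U
      using that unfolding openin_pullback_topology by blast
  qed
  show "open_map (pullback_topology X g T) T g"
    unfolding open_map_def openin_pullback_topology
  proof (intro allI impI, elim exE conjE)
    fix U W assume W: "openin T W" and U: "U = g -` W \<inter> X"
    have "g ` U = W \<inter> g ` X" unfolding U by blast
    then have "g ` U = W" using g openin_subset[OF W] unfolding bij_betw_def by blast
    with W show "openin T (g ` U)" by simp
  qed
  show "g ` topspace (pullback_topology X g T) = topspace T"
    "inj_on g (topspace (pullback_topology X g T))"
    using g unfolding top bij_betw_def by auto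
qed

lemma I_crowded_pullback_topology:
  assumes B: "pi_base T B" and S: "\<forall>k. S k \<subseteq> X" "\<forall>A\<in>I. finite {k. S k \<subseteq> A}"
    and g: "\<forall>V\<in>B. infinite {k. g ` S k \<subseteq> V}"
  shows "I_crowded I (pullback_topology X g T)"
  unfolding I_crowded_def
proof (intro allI impI, elim conjE)
  fix U assume U: "openin (pullback_topology X g T) U" "U \<in> I"
  then obtain W where W: "openin T W" "U = g -` W \<inter> X" unfolding openin_pullback_topology by blast
  show "U = {}"
  proof (rule ccontr)
    assume "U \<noteq> {}"
    then have "W \<noteq> {}" using W(2) by blast
    with B W(1) obtain V where V: "V \<in> B" "V \<subseteq> W" unfolding pi_base_def by blast
    have "S k \<subseteq> U" if "g ` S k \<subseteq> V" for k
      using that V(2) S(1) unfolding W(2) by blast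
    then have "{k. g ` S k \<subseteq> V} \<subseteq> {k. S k \<subseteq> U}" by blast
    moreover have "finite {k. S k \<subseteq> U}" using S(2) U(2) by blast
    ultimately have "finite {k. g ` S k \<subseteq> V}" by (rule finite_subset)
    with g V(1) show False by blast
  qed
qed

theorem mainTheorem10:
  fixes X :: "'a set" and I :: "'a set set" and \<rho> :: "'b topology"
  assumes "countable X" and "infinite X"
    and "is_ideal X I" and "meager_ideal X I"
    and "countable (topspace \<rho>)" and "topspace \<rho> \<noteq> {}" and "crowded \<rho>" and "t1_space \<rho>"
    and "pi_weight_less_mc \<rho>"
  shows "\<exists>\<tau>::'a topology. topspace \<tau> = X \<and> I_crowded I \<tau> \<and> (\<tau> homeomorphic_space \<rho>)"
proof -
  obtain S :: "nat \<Rightarrow> 'a set" where S: "disjoint_family S" "\<forall>k. finite (S k)" "\<forall>k. S k \<subseteq> X"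
    "\<forall>A\<in>I. finite {k. S k \<subseteq> A}"
    by (rule meager_ideal_disjoint_blocks[OF assms(3,4)])
  obtain B where B: "pi_base \<rho> B" "MA_countable B"
    using assms(9) unfolding pi_weight_less_mc_def pi_weight_witness_def by blast
  have B_open: "openin \<rho> V" "V \<noteq> {}" if "V \<in> B" for V
    using B(1) that unfolding pi_base_def by blast+
  obtain g where g: "bij_betw g X (topspace \<rho>)" "\<forall>V\<in>B. infinite {k. g ` S k \<subseteq> V}"
    by (rule MA_countable_bijection_blocks_into[OF assms(1,2,5) B(2)
          infinite_pi_base[OF assms(8,7,6) B(1)] openin_subset[OF B_open(1)]
          infinite_openin_crowded_t1[OF assms(8,7) B_open] S(1-3)])
  define \<tau> where "\<tau> = pullback_topology X g \<rho>"
  have "topspace \<tau> = X"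
    using g(1) unfolding \<tau>_def topspace_pullback_topology bij_betw_def by blast
  moreover have "I_crowded I \<tau>"
    unfolding \<tau>_def using B(1) S(3,4) g(2) by (rule I_crowded_pullback_topology)
  moreover have "\<tau> homeomorphic_space \<rho>"
    unfolding \<tau>_def homeomorphic_space_def
    using homeomorphic_map_pullback_topology[OF g(1)] unfolding homeomorphic_map_maps by blast
  ultimately show ?thesis by blast
qed

end
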